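(* Let $G$ be a compactly generated totally disconnected locally compact group and $N$ a closed normal subgroup of $G$. If there is a Cayley-Abels graph $\Gamma$ for $G$ such that $\deg(\Gamma/N)=\deg(\Gamma)$, then there exists a compact normal subgroup $L$ of $G$ acting trivially on $\Gamma$ such that $L$ is an open subgroup of $N$.
   Context: Graphs $\Gamma=(V,E,o,r)$ have directed edges with initial-vertex map $o$ and involutive reversal $e\mapsto\bar e$; $\deg(v)=|o^{-1}(v)|$, $\deg(\Gamma)=\sup_v\deg(v)$. For $N$ acting on $\Gamma$, $\Gamma/N$ is the quotient graph whose vertices and edges are the $N$-orbits of vertices and edges, with $o(Ne)=No(e)$, $\overline{Ne}=N\bar e$. A Cayley-Abels graph for a totally disconnected locally compact group $G$ is a connected graph of finite degree on which $G$ acts vertex-transitively by automorphisms with compact open vertex stabilizers. *)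

theory Defs
  imports "HOL-Analysis.Analysis" "HOL-Algebra.Group_Action" "HOL-Algebra.Generated_Groups" "HOL-Library.Extended_Nat"
begin

definition topological_group :: "('g, 'b) monoid_scheme \<Rightarrow> 'g topology \<Rightarrow> bool" where
  "topological_group G T \<longleftrightarrow> group G \<and> topspace T = carrier G \<and>
     continuous_map (prod_topology T T) T (\<lambda>(x, y). x \<otimes>\<^bsub>G\<^esub> y) \<and>
     continuous_map T T (\<lambda>x. inv\<^bsub>G\<^esub> x)"

definition totally_disconnected_space :: "'a topology \<Rightarrow> bool" where
  "totally_disconnected_space T \<longleftrightarrow> (\<forall>S. connectedin T S \<longrightarrow> (\<exists>a. S \<subseteq> {a}))"

definition tdlc_group :: "('g, 'b) monoid_scheme \<Rightarrow> 'g topology \<Rightarrow> bool" where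
  "tdlc_group G T \<longleftrightarrow> topological_group G T \<and> Hausdorff_space T \<and>
     locally_compact_space T \<and> totally_disconnected_space T"

definition compactly_generated :: "('g, 'b) monoid_scheme \<Rightarrow> 'g topology \<Rightarrow> bool" where
  "compactly_generated G T \<longleftrightarrow>
     (\<exists>K. K \<subseteq> carrier G \<and> compactin T K \<and> generate G K = carrier G)"

text \<open>A graph with vertex set V, edge set E, initial vertex map og, terminal vertex map r
  and involutive reversal rv with r e = og (rv e).\<close>
definition is_graph ::
  "'v set \<Rightarrow> 'e set \<Rightarrow> ('e \<Rightarrow> 'v) \<Rightarrow> ('e \<Rightarrow> 'v) \<Rightarrow> ('e \<Rightarrow> 'e) \<Rightarrow> bool" where
  "is_graph V E og r rv \<longleftrightarrow> (\<forall>e\<in>E. og e \<in> V \<and> rv e \<in> E \<and> rv (rv e) = e \<and> r e = og (rv e))"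

inductive reachable ::
  "'e set \<Rightarrow> ('e \<Rightarrow> 'v) \<Rightarrow> ('e \<Rightarrow> 'v) \<Rightarrow> 'v \<Rightarrow> 'v \<Rightarrow> bool"
  for E og r where
  refl: "reachable E og r v v"
| step: "reachable E og r u v \<Longrightarrow> e \<in> E \<Longrightarrow> og e = v \<Longrightarrow> reachable E og r u (r e)"

definition graph_connected :: "'v set \<Rightarrow> 'e set \<Rightarrow> ('e \<Rightarrow> 'v) \<Rightarrow> ('e \<Rightarrow> 'v) \<Rightarrow> bool" where
  "graph_connected V E og r \<longleftrightarrow> (\<forall>u\<in>V. \<forall>v\<in>V. reachable E og r u v)"

definition vdeg :: "'e set \<Rightarrow> ('e \<Rightarrow> 'v) \<Rightarrow> 'v \<Rightarrow> enat" where
  "vdeg E og v = (if finite {e\<in>E. og e = v} then enat (card {e\<in>E. og e = v}) else \<infinity>)"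

definition graph_deg :: "'v set \<Rightarrow> 'e set \<Rightarrow> ('e \<Rightarrow> 'v) \<Rightarrow> enat" where
  "graph_deg V E og = (SUP v\<in>V. vdeg E og v)"

definition acts_on_graph ::
  "('g, 'b) monoid_scheme \<Rightarrow> 'v set \<Rightarrow> 'e set \<Rightarrow> ('e \<Rightarrow> 'v) \<Rightarrow> ('e \<Rightarrow> 'e)
   \<Rightarrow> ('g \<Rightarrow> 'v \<Rightarrow> 'v) \<Rightarrow> ('g \<Rightarrow> 'e \<Rightarrow> 'e) \<Rightarrow> bool" where
  "acts_on_graph G V E og rv actV actE \<longleftrightarrow>
     group_action G V actV \<and> group_action G E actE \<and>
     (\<forall>g\<in>carrier G. \<forall>e\<in>E. og (actE g e) = actV g (og e) \<and> rv (actE g e) = actE g (rv e))"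

definition cayley_abels_graph ::
  "('g, 'b) monoid_scheme \<Rightarrow> 'g topology \<Rightarrow> 'v set \<Rightarrow> 'e set \<Rightarrow> ('e \<Rightarrow> 'v) \<Rightarrow> ('e \<Rightarrow> 'v)
   \<Rightarrow> ('e \<Rightarrow> 'e) \<Rightarrow> ('g \<Rightarrow> 'v \<Rightarrow> 'v) \<Rightarrow> ('g \<Rightarrow> 'e \<Rightarrow> 'e) \<Rightarrow> bool" where
  "cayley_abels_graph G T V E og r rv actV actE \<longleftrightarrow>
     V \<noteq> {} \<and> is_graph V E og r rv \<and> graph_connected V E og r \<and> graph_deg V E og < \<infinity> \<and>
     acts_on_graph G V E og rv actV actE \<and>
     (\<forall>u\<in>V. \<forall>v\<in>V. \<exists>g\<in>carrier G. actV g u = v) \<and>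
     (\<forall>v\<in>V. compactin T (stabilizer G actV v) \<and> openin T (stabilizer G actV v))"

definition sub_orbit :: "'g set \<Rightarrow> ('g \<Rightarrow> 'a \<Rightarrow> 'a) \<Rightarrow> 'a \<Rightarrow> 'a set" where
  "sub_orbit N act x = (\<lambda>n. act n x) ` N"

text \<open>Vertices / edges of Gamma/N are N-orbits; og(Ne) = N og(e), which is the image og ` (Ne).\<close>
definition quot_vertices :: "'g set \<Rightarrow> ('g \<Rightarrow> 'v \<Rightarrow> 'v) \<Rightarrow> 'v set \<Rightarrow> 'v set set" where
  "quot_vertices N actV V = sub_orbit N actV ` V"

definition quot_edges :: "'g set \<Rightarrow> ('g \<Rightarrow> 'e \<Rightarrow> 'e) \<Rightarrow> 'e set \<Rightarrow> 'e set set" where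
  "quot_edges N actE E = sub_orbit N actE ` E"

definition quot_origin :: "('e \<Rightarrow> 'v) \<Rightarrow> 'e set \<Rightarrow> 'v set" where
  "quot_origin og X = og ` X"

definition quot_deg ::
  "'g set \<Rightarrow> 'v set \<Rightarrow> 'e set \<Rightarrow> ('e \<Rightarrow> 'v) \<Rightarrow> ('g \<Rightarrow> 'v \<Rightarrow> 'v) \<Rightarrow> ('g \<Rightarrow> 'e \<Rightarrow> 'e) \<Rightarrow> enat" where
  "quot_deg N V E og actV actE =
     graph_deg (quot_vertices N actV V) (quot_edges N actE E) (quot_origin og)"

definition acts_trivially ::
  "'g set \<Rightarrow> 'v set \<Rightarrow> 'e set \<Rightarrow> ('g \<Rightarrow> 'v \<Rightarrow> 'v) \<Rightarrow> ('g \<Rightarrow> 'e \<Rightarrow> 'e) \<Rightarrow> bool" where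
  "acts_trivially L V E actV actE \<longleftrightarrow>
     (\<forall>g\<in>L. (\<forall>v\<in>V. actV g v = v) \<and> (\<forall>e\<in>E. actE g e = e))"

end

theory Submission
  imports Defs
begin

text \<open>Since \<open>G\<close> acts vertex-transitively, all stars \<open>o\<^sup>-\<^sup>1(v)\<close> of \<open>\<Gamma>\<close> have the same
  finite size \<open>d = deg(\<Gamma>)\<close>. The star of \<open>\<Gamma>/N\<close> at \<open>Nw\<close> is the image of the star at \<open>w\<close>
  under \<open>e \<mapsto> Ne\<close>, so \<open>deg(\<Gamma>/N) = d\<close> forces this map to be injective on some star, hence,
  \<open>N\<close> being normal, on every star. An element of \<open>N\<close> fixing a vertex then sends each edge at
  that vertex to an edge at the same vertex in the same \<open>N\<close>-orbit, i.e.\ fixes it; by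
  connectedness \<open>L = N \<inter> G\<^sub>v\<close> fixes \<open>\<Gamma>\<close> pointwise. Hence \<open>L\<close> is normal in \<open>G\<close>, and it is
  compact and open in \<open>N\<close> because \<open>G\<^sub>v\<close> is compact and open.\<close>

lemma Sup_enat_attained:
  fixes A :: "enat set"
  assumes "Sup A = enat d" and "A \<noteq> {}"
  shows "enat d \<in> A"
proof -
  have "finite A"
  proof (rule ccontr)
    assume "infinite A"
    then have "Sup A = \<infinity>" unfolding Sup_enat_def using assms(2) by simp
    then show False using assms(1) by simp
  qed
  then have "Sup A = Max A" unfolding Sup_enat_def using assms(2) by simp
  then show ?thesis using Max_in[OF \<open>finite A\<close> assms(2)] assms(1) by simp
qed

context group_action
begin

lemma sub_orbit_act_r_coset:
  assumes "N \<subseteq> carrier G" "g \<in> carrier G" "x \<in> E"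
  shows "sub_orbit N \<phi> (\<phi> g x) = (\<lambda>m. \<phi> m x) ` (N #> g)"
proof -
  have "sub_orbit N \<phi> (\<phi> g x) = (\<lambda>n. \<phi> (n \<otimes> g) x) ` N"
    unfolding sub_orbit_def using assms composition_rule by (intro image_cong) auto
  also have "\<dots> = (\<lambda>m. \<phi> m x) ` (N #> g)" unfolding r_coset_def by auto
  finally show ?thesis .
qed

lemma act_sub_orbit_l_coset:
  assumes "N \<subseteq> carrier G" "g \<in> carrier G" "x \<in> E"
  shows "\<phi> g ` sub_orbit N \<phi> x = (\<lambda>m. \<phi> m x) ` (g <# N)"
proof -
  have "\<phi> g ` sub_orbit N \<phi> x = (\<lambda>n. \<phi> (g \<otimes> n) x) ` N"
    unfolding sub_orbit_def image_image using assms composition_rule by (intro image_cong) auto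
  also have "\<dots> = (\<lambda>m. \<phi> m x) ` (g <# N)" unfolding l_coset_def by auto
  finally show ?thesis .
qed

lemma act_act_inv:
  assumes "g \<in> carrier G" "x \<in> E"
  shows "\<phi> g (\<phi> (inv g) x) = x"
proof -
  have "group G" using group_hom.axioms(1)[OF group_hom] .
  then show ?thesis using orbit_sym_aux[of "inv g" x] assms by simp
qed

lemma act_closed: "g \<in> carrier G \<Longrightarrow> x \<in> E \<Longrightarrow> \<phi> g x \<in> E"
  using element_image by blast

lemma sub_orbit_subset:
  assumes "N \<subseteq> carrier G" "x \<in> E"
  shows "sub_orbit N \<phi> x \<subseteq> E"
  using assms element_image unfolding sub_orbit_def by blast

lemma sub_orbit_refl:
  assumes "subgroup N G" "x \<in> E"
  shows "x \<in> sub_orbit N \<phi> x"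
proof -
  have "\<phi> \<one> x = x" using id_eq_one assms(2) by (metis restrict_apply')
  then show ?thesis using subgroup.one_closed[OF assms(1)] unfolding sub_orbit_def by force
qed

lemma sub_orbit_act:
  assumes "subgroup N G" "n \<in> N" "x \<in> E"
  shows "sub_orbit N \<phi> (\<phi> n x) = sub_orbit N \<phi> x"
proof -
  have "group G" using group_hom.axioms(1)[OF group_hom] .
  then have "N #> n = N" using subgroup.rcos_const[OF assms(1)] assms(2) by simp
  then show ?thesis
    using sub_orbit_act_r_coset[of N n x] assms(2,3) subgroup.subset[OF assms(1)]
    by (auto simp add: sub_orbit_def)
qed

lemma sub_orbit_act_normal:
  assumes "N \<lhd> G" "g \<in> carrier G" "x \<in> E"
  shows "sub_orbit N \<phi> (\<phi> g x) = \<phi> g ` sub_orbit N \<phi> x"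
proof -
  have "N \<subseteq> carrier G" using normal_imp_subgroup[OF assms(1)] subgroup.subset by blast
  moreover have "N #> g = g <# N" using normal.coset_eq[OF assms(1)] assms(2) by blast
  ultimately show ?thesis
    using assms(2,3) sub_orbit_act_r_coset act_sub_orbit_l_coset by simp
qed

lemma normal_Int_stabilizer:
  assumes "N \<lhd> G" and "x \<in> E"
    and fix_all: "\<And>n y. n \<in> N \<inter> stabilizer G \<phi> x \<Longrightarrow> y \<in> E \<Longrightarrow> \<phi> n y = y"
  shows "N \<inter> stabilizer G \<phi> x \<lhd> G"
proof -
  interpret group G using group_hom.axioms(1)[OF group_hom] .
  have conj: "g \<otimes> h \<otimes> inv g \<in> stabilizer G \<phi> x"
    if g: "g \<in> carrier G" and h: "h \<in> N \<inter> stabilizer G \<phi> x" for g h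
  proof -
    have hG: "h \<in> carrier G" using h unfolding stabilizer_def by blast
    have y: "\<phi> (inv g) x \<in> E" using act_closed g assms(2) by simp
    have "\<phi> (g \<otimes> h \<otimes> inv g) x = \<phi> g (\<phi> h (\<phi> (inv g) x))"
      using composition_rule assms(2) y g hG by simp
    also have "\<dots> = \<phi> g (\<phi> (inv g) x)" using fix_all[OF h y] by simp
    also have "\<dots> = x" using act_act_inv g assms(2) by simp
    finally show ?thesis using g hG unfolding stabilizer_def by simp
  qed
  have "subgroup (N \<inter> stabilizer G \<phi> x) G"
    using subgroups_Inter_pair normal_imp_subgroup[OF assms(1)] stabilizer_subgroup[OF assms(2)] .
  then show ?thesis
    unfolding normal_inv_iff using conj normal.inv_op_closed2[OF assms(1)] by blast
qed

end

lemma vdeg_eq_enat_iff: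
  "vdeg E og v = enat d \<longleftrightarrow> finite {e \<in> E. og e = v} \<and> card {e \<in> E. og e = v} = d"
  unfolding vdeg_def by simp

locale graph_action =
  fixes G :: "('g, 'b) monoid_scheme" (structure)
    and V :: "'v set" and E :: "'e set"
    and og :: "'e \<Rightarrow> 'v" and r :: "'e \<Rightarrow> 'v" and rv :: "'e \<Rightarrow> 'e"
    and actV :: "'g \<Rightarrow> 'v \<Rightarrow> 'v" and actE :: "'g \<Rightarrow> 'e \<Rightarrow> 'e"
  assumes graph: "is_graph V E og r rv"
    and action: "acts_on_graph G V E og rv actV actE"
begin

sublocale aV: group_action G V actV
  using action unfolding acts_on_graph_def by blast

sublocale aE: group_action G E actE
  using action unfolding acts_on_graph_def by blast

sublocale group G
  using group_hom.axioms(1)[OF aV.group_hom] .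

abbreviation star :: "'v \<Rightarrow> 'e set" where
  "star v \<equiv> {e \<in> E. og e = v}"

lemma og_act: "g \<in> carrier G \<Longrightarrow> e \<in> E \<Longrightarrow> og (actE g e) = actV g (og e)"
  and rv_act: "g \<in> carrier G \<Longrightarrow> e \<in> E \<Longrightarrow> rv (actE g e) = actE g (rv e)"
  using action unfolding acts_on_graph_def by blast+

lemma og_in_V: "e \<in> E \<Longrightarrow> og e \<in> V"
  and rv_in_E: "e \<in> E \<Longrightarrow> rv e \<in> E"
  and r_eq_og_rv: "e \<in> E \<Longrightarrow> r e = og (rv e)"
  using graph unfolding is_graph_def by blast+

lemma r_in_V: "e \<in> E \<Longrightarrow> r e \<in> V"
  using og_in_V rv_in_E r_eq_og_rv by simp

lemma r_act:
  assumes "g \<in> carrier G" "e \<in> E"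
  shows "r (actE g e) = actV g (r e)"
proof -
  have "actE g e \<in> E" using aE.act_closed assms by blast
  then show ?thesis using assms r_eq_og_rv og_act rv_act rv_in_E by simp
qed

lemma star_act:
  assumes "g \<in> carrier G" "v \<in> V"
  shows "actE g ` star v = star (actV g v)"
proof
  show "actE g ` star v \<subseteq> star (actV g v)"
    using assms og_act aE.act_closed by blast
  show "star (actV g v) \<subseteq> actE g ` star v"
  proof
    fix e assume e: "e \<in> star (actV g v)"
    have ig: "inv g \<in> carrier G" using assms(1) by simp
    have "actE (inv g) e \<in> star v"
      using e ig og_act[OF ig] aE.act_closed[OF ig] aV.orbit_sym_aux[OF assms(1,2)] by auto
    moreover have "e = actE g (actE (inv g) e)" using aE.act_act_inv assms(1) e by simp
    ultimately show "e \<in> actE g ` star v" by blast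
  qed
qed

lemma vdeg_act:
  assumes "g \<in> carrier G" "v \<in> V"
  shows "vdeg E og (actV g v) = vdeg E og v"
proof -
  have "inj_on (actE g) (star v)" using aE.inj_prop[OF assms(1)] by (rule inj_on_subset) blast
  then have "bij_betw (actE g) (star v) (star (actV g v))"
    using star_act[OF assms] unfolding bij_betw_def by blast
  then have "finite (star v) = finite (star (actV g v))" "card (star v) = card (star (actV g v))"
    using bij_betw_finite bij_betw_same_card by blast+
  then show ?thesis unfolding vdeg_def by simp
qed

lemma graph_deg_eq_vdeg:
  assumes transitive: "\<And>u v. u \<in> V \<Longrightarrow> v \<in> V \<Longrightarrow> \<exists>g\<in>carrier G. actV g u = v"
    and "v \<in> V"
  shows "graph_deg V E og = vdeg E og v"
proof -
  have "vdeg E og u = vdeg E og v" if u: "u \<in> V" for u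
  proof -
    obtain g where "g \<in> carrier G" "actV g v = u" using transitive[OF assms(2) u] by blast
    then show ?thesis using vdeg_act assms(2) by blast
  qed
  then have "graph_deg V E og = (SUP u\<in>V. vdeg E og v)"
    unfolding graph_deg_def by (rule SUP_cong[OF HOL.refl])
  also have "\<dots> = vdeg E og v" using assms(2) by (intro SUP_const) blast
  finally show ?thesis .
qed

lemma og_sub_orbit:
  assumes "N \<subseteq> carrier G" "e \<in> E"
  shows "og ` sub_orbit N actE e = sub_orbit N actV (og e)"
  unfolding sub_orbit_def image_image using assms og_act by (intro image_cong) auto

lemma quot_star:
  assumes "subgroup N G" "w \<in> V"
  shows "{Y \<in> quot_edges N actE E. quot_origin og Y = sub_orbit N actV w} = sub_orbit N actE ` star w"
proof
  have NG: "N \<subseteq> carrier G" using subgroup.subset[OF assms(1)] .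
  show "sub_orbit N actE ` star w \<subseteq> {Y \<in> quot_edges N actE E. quot_origin og Y = sub_orbit N actV w}"
    using og_sub_orbit[OF NG] unfolding quot_edges_def quot_origin_def by auto
  show "{Y \<in> quot_edges N actE E. quot_origin og Y = sub_orbit N actV w} \<subseteq> sub_orbit N actE ` star w"
  proof
    fix Y assume "Y \<in> {Y \<in> quot_edges N actE E. quot_origin og Y = sub_orbit N actV w}"
    then obtain e' where e': "e' \<in> E" "Y = sub_orbit N actE e'"
      and oY: "og ` Y = sub_orbit N actV w"
      unfolding quot_edges_def quot_origin_def by blast
    have "og e' \<in> sub_orbit N actV w"
      using oY aE.sub_orbit_refl[OF assms(1) e'(1)] e'(2) by blast
    then obtain n where n: "n \<in> N" "og e' = actV n w" unfolding sub_orbit_def by blast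
    have nG: "n \<in> carrier G" and inN: "inv n \<in> N"
      using n(1) NG subgroup.m_inv_closed[OF assms(1)] by auto
    define e where "e = actE (inv n) e'"
    have "e \<in> E" using aE.act_closed nG e'(1) unfolding e_def by simp
    moreover have "og e = w"
      using og_act[of "inv n" e'] nG e'(1) n(2) aV.orbit_sym_aux[OF nG assms(2)] unfolding e_def by simp
    moreover have "sub_orbit N actE e = Y"
      using aE.sub_orbit_act[OF assms(1) inN e'(1)] e'(2) unfolding e_def by simp
    ultimately show "Y \<in> sub_orbit N actE ` star w" by blast
  qed
qed

lemma quot_vdeg:
  assumes "subgroup N G" "w \<in> V" "finite (star w)"
  shows "vdeg (quot_edges N actE E) (quot_origin og) (sub_orbit N actV w)
           = enat (card (sub_orbit N actE ` star w))"
  unfolding vdeg_def quot_star[OF assms(1,2)] using assms(3) by simp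

lemma inj_on_sub_orbit_star_act:
  assumes "N \<lhd> G" "g \<in> carrier G" "w \<in> V" and inj: "inj_on (sub_orbit N actE) (star w)"
  shows "inj_on (sub_orbit N actE) (star (actV g w))"
proof -
  have NG: "N \<subseteq> carrier G" using normal_imp_subgroup[OF assms(1)] subgroup.subset by blast
  have "inj_on (sub_orbit N actE \<circ> actE g) (star w)"
  proof (rule inj_onI)
    fix e f assume e: "e \<in> star w" and f: "f \<in> star w"
      and "(sub_orbit N actE \<circ> actE g) e = (sub_orbit N actE \<circ> actE g) f"
    then have "actE g ` sub_orbit N actE e = actE g ` sub_orbit N actE f"
      using aE.sub_orbit_act_normal[OF assms(1,2)] by simp
    moreover have "sub_orbit N actE e \<subseteq> E" "sub_orbit N actE f \<subseteq> E"
      using aE.sub_orbit_subset[OF NG] e f by auto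
    ultimately have "sub_orbit N actE e = sub_orbit N actE f"
      using inj_on_image_eq_iff[OF aE.inj_prop[OF assms(2)]] by blast
    then show "e = f" using inj e f by (simp add: inj_on_eq_iff)
  qed
  then show ?thesis using inj_on_imageI star_act[OF assms(2,3)] by metis
qed

lemma fixes_star_of_inj:
  assumes "subgroup N G" and inj: "inj_on (sub_orbit N actE) (star u)"
    and "n \<in> N" "actV n u = u" "e \<in> star u"
  shows "actE n e = e"
proof -
  have nG: "n \<in> carrier G" using subgroup.subset[OF assms(1)] assms(3) by blast
  have "actE n e \<in> star u" using og_act[OF nG] aE.act_closed[OF nG] assms(4,5) by auto
  moreover have "sub_orbit N actE (actE n e) = sub_orbit N actE e"
    using aE.sub_orbit_act[OF assms(1,3)] assms(5) by blast
  ultimately show ?thesis using inj assms(5) by (simp add: inj_on_eq_iff)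
qed

lemma fixes_vertices_of_connected:
  assumes "graph_connected V E og r" "v0 \<in> V" "u \<in> V"
    and "n \<in> carrier G" "actV n v0 = v0"
    and fix_star: "\<And>u e. u \<in> V \<Longrightarrow> actV n u = u \<Longrightarrow> e \<in> star u \<Longrightarrow> actE n e = e"
  shows "actV n u = u"
proof -
  have "reachable E og r v0 u" using assms(1-3) unfolding graph_connected_def by blast
  from this assms(2,5) have "u \<in> V \<and> actV n u = u"
  proof (induction rule: reachable.induct)
    case (step u v e)
    then have "actE n e = e" using fix_star by blast
    then show ?case using r_act[OF assms(4) step.hyps(2)] r_in_V[OF step.hyps(2)] by simp
  qed simp
  then show ?thesis ..
qed

lemma exists_inj_on_sub_orbit_star:
  assumes "subgroup N G" "V \<noteq> {}"
    and regular: "\<And>v. v \<in> V \<Longrightarrow> finite (star v) \<and> card (star v) = d"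
    and "quot_deg N V E og actV actE = enat d"
  shows "\<exists>w\<in>V. inj_on (sub_orbit N actE) (star w)"
proof -
  let ?qdeg = "\<lambda>w. vdeg (quot_edges N actE E) (quot_origin og) (sub_orbit N actV w)"
  have "Sup (?qdeg ` V) = enat d"
    using assms(4) unfolding quot_deg_def graph_deg_def quot_vertices_def image_image .
  then have "enat d \<in> ?qdeg ` V"
    by (rule Sup_enat_attained) (use assms(2) in simp)
  then obtain w where w: "enat d = ?qdeg w" "w \<in> V" by (rule imageE)
  have fin: "finite (star w)" and card: "card (star w) = d" using regular[OF w(2)] by simp_all
  have "card (sub_orbit N actE ` star w) = card (star w)"
    using quot_vdeg[OF assms(1) w(2) fin] w(1) card by simp
  then have "inj_on (sub_orbit N actE) (star w)" by (simp add: inj_on_iff_eq_card[OF fin])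
  then show ?thesis using w(2) by blast
qed

lemma acts_trivially_Int_stabilizer:
  assumes "subgroup N G" "graph_connected V E og r" "v0 \<in> V"
    and inj: "\<And>u. u \<in> V \<Longrightarrow> inj_on (sub_orbit N actE) (star u)"
  shows "acts_trivially (N \<inter> stabilizer G actV v0) V E actV actE"
  unfolding acts_trivially_def
proof (intro ballI conjI)
  fix n assume n: "n \<in> N \<inter> stabilizer G actV v0"
  then have nN: "n \<in> N" and nG: "n \<in> carrier G" and fixes_v0: "actV n v0 = v0"
    unfolding stabilizer_def by simp_all
  have fix_star: "actE n e = e" if "u \<in> V" "actV n u = u" "e \<in> star u" for u e
    using fixes_star_of_inj[OF assms(1) inj[OF that(1)] nN that(2,3)] .
  show fix_V: "actV n u = u" if "u \<in> V" for u
    using fixes_vertices_of_connected[OF assms(2,3) that nG fixes_v0 fix_star] .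
  show "actE n e = e" if "e \<in> E" for e
    using fix_star[OF og_in_V[OF that] fix_V[OF og_in_V[OF that]]] that by simp
qed

lemma inj_on_sub_orbit_star_if_quot_deg_eq:
  assumes "N \<lhd> G"
    and transitive: "\<And>u v. u \<in> V \<Longrightarrow> v \<in> V \<Longrightarrow> \<exists>g\<in>carrier G. actV g u = v"
    and "graph_deg V E og < \<infinity>" "quot_deg N V E og actV actE = graph_deg V E og" "u \<in> V"
  shows "inj_on (sub_orbit N actE) (star u)"
proof -
  have subN: "subgroup N G" using normal_imp_subgroup[OF assms(1)] .
  obtain d where d: "graph_deg V E og = enat d" using assms(3) by (cases "graph_deg V E og") auto
  have regular: "finite (star v) \<and> card (star v) = d" if v: "v \<in> V" for v
  proof -
    have "vdeg E og v = enat d" using graph_deg_eq_vdeg[OF transitive v] d by simp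
    then show ?thesis by (rule vdeg_eq_enat_iff[THEN iffD1])
  qed
  have "quot_deg N V E og actV actE = enat d" using assms(4) d by simp
  then obtain w where w: "w \<in> V" "inj_on (sub_orbit N actE) (star w)"
    using exists_inj_on_sub_orbit_star[OF subN _ regular] assms(5) by blast
  obtain g where g: "g \<in> carrier G" "actV g w = u" using transitive[OF w(1) assms(5)] by blast
  from inj_on_sub_orbit_star_act[OF assms(1) g(1) w] show ?thesis unfolding g(2) .
qed

end

theorem mainTheorem5:
  fixes G :: "('g, 'b) monoid_scheme" and T :: "'g topology"
    and N :: "'g set"
    and V :: "'v set" and E :: "'e set" and og :: "'e \<Rightarrow> 'v" and r :: "'e \<Rightarrow> 'v"
    and rv :: "'e \<Rightarrow> 'e" and actV :: "'g \<Rightarrow> 'v \<Rightarrow> 'v" and actE :: "'g \<Rightarrow> 'e \<Rightarrow> 'e"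
  assumes "tdlc_group G T"
    and "compactly_generated G T"
    and "N \<lhd> G" and "closedin T N"
    and "cayley_abels_graph G T V E og r rv actV actE"
    and "quot_deg N V E og actV actE = graph_deg V E og"
  shows "\<exists>L. L \<lhd> G \<and> compactin T L \<and> acts_trivially L V E actV actE \<and>
             L \<subseteq> N \<and> openin (subtopology T N) L"
proof -
  have nonempty: "V \<noteq> {}" and graph: "is_graph V E og r rv" and conn: "graph_connected V E og r"
    and deg_finite: "graph_deg V E og < \<infinity>" and action: "acts_on_graph G V E og rv actV actE"
    and transitive: "\<And>u v. u \<in> V \<Longrightarrow> v \<in> V \<Longrightarrow> \<exists>g\<in>carrier G. actV g u = v"
    and stab: "\<And>v. v \<in> V \<Longrightarrow> compactin T (stabilizer G actV v) \<and> openin T (stabilizer G actV v)"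
    using assms(5) unfolding cayley_abels_graph_def by simp_all
  interpret graph_action G V E og r rv actV actE using graph action by unfold_locales
  obtain v0 where v0: "v0 \<in> V" using nonempty by blast
  have stab_compact: "compactin T (stabilizer G actV v0)"
    and stab_open: "openin T (stabilizer G actV v0)" using stab[OF v0] by simp_all
  have trivial: "acts_trivially (N \<inter> stabilizer G actV v0) V E actV actE"
    using acts_trivially_Int_stabilizer[OF normal_imp_subgroup[OF assms(3)] conn v0]
      inj_on_sub_orbit_star_if_quot_deg_eq[OF assms(3) transitive deg_finite assms(6)] .
  have "N \<inter> stabilizer G actV v0 \<lhd> G"
    by (rule aV.normal_Int_stabilizer[OF assms(3) v0]) (use trivial in \<open>simp add: acts_trivially_def\<close>)
  moreover have "compactin T (N \<inter> stabilizer G actV v0)"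
    using assms(1) closed_compactin[OF stab_compact Int_lower2]
      closedin_Int[OF assms(4) compactin_imp_closedin[OF _ stab_compact]]
    unfolding tdlc_group_def by blast
  moreover have "openin (subtopology T N) (N \<inter> stabilizer G actV v0)"
    using openin_subtopology_Int2[OF stab_open] .
  ultimately show ?thesis using trivial Int_lower1 by blast
qed

end
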